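(* Let $M,N\in\mathbb{R}^{n\times n}$ be symmetric and assume there exists $\bar X\in\mathbb{R}^{n\times k}$ with $\bar X^\top N\bar X>0$. Then the following are equivalent: (i) $X^\top M X\ge 0$ for all $X\in\mathbb{R}^{n\times k}$ such that $X^\top N X\ge 0$; (ii) $X^\top M X\ge 0$ for all $X\in\mathbb{R}^{n\times k}$ such that $X^\top N X> 0$; (iii) there exists a scalar $\alpha\ge 0$ such that $M-\alpha N\ge 0$.
   Context: For symmetric matrices, $\ge 0$ means positive semidefinite and $>0$ means positive definite. *)

theory Defs
  imports "HOL-Analysis.Analysis"
begin

definition symmetric_mat :: "real^'m^'m \<Rightarrow> bool" where
  "symmetric_mat A \<longleftrightarrow> transpose A = A"

definition psd_mat :: "real^'m^'m \<Rightarrow> bool" where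
  "psd_mat A \<longleftrightarrow> symmetric_mat A \<and> (\<forall>v. 0 \<le> v \<bullet> (A *v v))"

definition pd_mat :: "real^'m^'m \<Rightarrow> bool" where
  "pd_mat A \<longleftrightarrow> symmetric_mat A \<and> (\<forall>v. v \<noteq> 0 \<longrightarrow> 0 < v \<bullet> (A *v v))"

end

theory Submission
  imports Defs
begin

text \<open>Only quadratic forms of vectors matter, since \<open>v\<^sup>T (X\<^sup>T A X) v = (X v)\<^sup>T A (X v)\<close>, and
  every \<open>z\<close> with \<open>z\<^sup>T N z > 0\<close> lies in the range of some \<open>X\<close> with \<open>X\<^sup>T N X > 0\<close>, obtained
  from \<open>Xbar\<close> by a rank-one change. So (ii) says that \<open>z\<^sup>T M z \<ge> 0\<close> whenever \<open>z\<^sup>T N z > 0\<close>;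
  perturbing \<open>z\<close> along a direction with \<open>x\<^sub>0\<^sup>T N x\<^sub>0 > 0\<close> and letting the perturbation
  vanish extends this to \<open>z\<^sup>T N z \<ge> 0\<close>. If \<open>x\<^sup>T N x > 0 > y\<^sup>T N y\<close>, the line \<open>y + t x\<close> meets
  the cone \<open>z\<^sup>T N z = 0\<close> at parameters \<open>t\<close> of both signs, where \<open>M\<close> is nonnegative; this
  gives \<open>y\<^sup>T M y / y\<^sup>T N y \<le> x\<^sup>T M x / x\<^sup>T N x\<close>. Hence the supremum \<open>\<alpha>\<close> of \<open>0\<close> and the
  ratios on the left satisfies \<open>M - \<alpha> N \<ge> 0\<close>.\<close>

definition qform :: "real^'n^'n \<Rightarrow> real^'n \<Rightarrow> real" where
  "qform A x = x \<bullet> (A *v x)"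

lemma psd_mat_iff_qform: "psd_mat A \<longleftrightarrow> symmetric_mat A \<and> (\<forall>v. 0 \<le> qform A v)"
  by (simp add: psd_mat_def qform_def)

lemma pd_mat_iff_qform: "pd_mat A \<longleftrightarrow> symmetric_mat A \<and> (\<forall>v. v \<noteq> 0 \<longrightarrow> 0 < qform A v)"
  by (simp add: pd_mat_def qform_def)

lemma pd_imp_psd_mat: "pd_mat A \<Longrightarrow> psd_mat A"
  by (metis pd_mat_iff_qform psd_mat_iff_qform qform_def inner_zero_left order.refl less_imp_le)

lemma symmetric_mat_congruence:
  "symmetric_mat A \<Longrightarrow> symmetric_mat (transpose X ** A ** X)"
  unfolding symmetric_mat_def by (simp add: matrix_transpose_mul matrix_mul_assoc)

lemma symmetric_mat_diff_scaleR:
  "symmetric_mat A \<Longrightarrow> symmetric_mat B \<Longrightarrow> symmetric_mat (A - c *\<^sub>R B)"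
  unfolding symmetric_mat_def by (simp add: transpose_def vec_eq_iff)

lemma qform_congruence:
  fixes X :: "real^'k^'n"
  shows "qform (transpose X ** A ** X) v = qform A (X *v v)"
proof -
  have "(transpose X ** A ** X) *v v = transpose X *v (A *v (X *v v))"
    by (simp add: matrix_vector_mul_assoc matrix_mul_assoc)
  then show ?thesis
    by (metis qform_def dot_lmul_matrix inner_commute transpose_matrix_vector)
qed

lemma qform_diff_scaleR: "qform (A - c *\<^sub>R B) x = qform A x - c * qform B x"
  by (simp add: qform_def matrix_vector_mult_diff_rdistrib
      scaleR_matrix_vector_assoc[symmetric] inner_diff_right)

lemma symmetric_mat_inner_commute:
  assumes "symmetric_mat A"
  shows "x \<bullet> (A *v y) = y \<bullet> (A *v x)"
proof -
  have "x \<bullet> (A *v y) = (x v* A) \<bullet> y"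
    by (simp add: dot_lmul_matrix)
  also have "x v* A = A *v x"
    using assms transpose_matrix_vector[of A x] by (simp add: symmetric_mat_def)
  finally show ?thesis
    by (simp add: inner_commute)
qed

lemma qform_add_scaleR:
  assumes "symmetric_mat A"
  shows "qform A (x + t *\<^sub>R y) = qform A x + 2*t*(x \<bullet> (A *v y)) + t\<^sup>2 * qform A y"
  using symmetric_mat_inner_commute[OF assms, of y x]
  by (simp add: qform_def matrix_vector_right_distrib matrix_vector_mult_scaleR
      inner_add_left inner_add_right power2_eq_square algebra_simps)

lemma nonneg_quadratic_at_right_0:
  fixes a b c :: real
  assumes "\<forall>s>0. 0 \<le> a + b * s + c * s\<^sup>2"
  shows "0 \<le> a"
proof (rule tendsto_lowerbound)
  show "((\<lambda>s. a + b * s + c * s\<^sup>2) \<longlongrightarrow> a) (at_right 0)"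
    by (auto intro!: tendsto_eq_intros)
  show "\<forall>\<^sub>F s in at_right 0. 0 \<le> a + b * s + c * s\<^sup>2"
    using assms eventually_at_right_less[of 0] by (auto elim: eventually_mono)
qed simp

lemma quadratic_has_roots_of_both_signs:
  fixes a b c :: real
  assumes "0 < a" and "c < 0"
  obtains t1 t2 where "0 < t1" "c + 2*t1*b + t1\<^sup>2*a = 0" "t2 < 0" "c + 2*t2*b + t2\<^sup>2*a = 0"
proof
  define D where "D = b\<^sup>2 - a*c"
  have "b\<^sup>2 < D" using assms by (simp add: D_def mult_pos_neg)
  then have sD: "\<bar>b\<bar> < sqrt D" by (metis real_sqrt_abs real_sqrt_less_iff)
  have sq: "(sqrt D)\<^sup>2 = D" using \<open>b\<^sup>2 < D\<close> by (smt (verit) real_sqrt_pow2 zero_le_power2)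
  show "0 < (-b + sqrt D)/a" "(-b - sqrt D)/a < 0"
    using sD assms by (auto simp: divide_neg_pos)
  show "c + 2*((-b + sqrt D)/a)*b + ((-b + sqrt D)/a)\<^sup>2*a = 0"
       "c + 2*((-b - sqrt D)/a)*b + ((-b - sqrt D)/a)\<^sup>2*a = 0"
    using assms sq by (simp_all add: D_def field_simps power2_eq_square)
qed

lemma qform_nonneg_of_strict:
  assumes sM: "symmetric_mat M" and sN: "symmetric_mat N"
    and x0: "0 < qform N x0"
    and strict: "\<And>z. 0 < qform N z \<Longrightarrow> 0 \<le> qform M z"
    and z: "0 \<le> qform N z"
  shows "0 \<le> qform M z"
proof (cases "qform N z = 0")
  case False
  then show ?thesis using strict z by simp
next
  case z0: True
  define \<sigma> :: real where "\<sigma> = (if 0 \<le> z \<bullet> (N *v x0) then 1 else -1)"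
  have \<sigma>: "\<sigma>\<^sup>2 = 1" "0 \<le> \<sigma> * (z \<bullet> (N *v x0))"
    by (auto simp: \<sigma>_def)
  have "\<forall>s>0. 0 \<le> qform M z + (2 * \<sigma> * (z \<bullet> (M *v x0))) * s + qform M x0 * s\<^sup>2"
  proof (intro allI impI)
    fix s :: real
    assume "0 < s"
    have "qform N (z + (\<sigma> * s) *\<^sub>R x0) = 2 * s * (\<sigma> * (z \<bullet> (N *v x0))) + s\<^sup>2 * qform N x0"
      using qform_add_scaleR[OF sN, of z "\<sigma> * s" x0] z0 \<sigma>(1)
      by (simp add: power_mult_distrib algebra_simps)
    also have "\<dots> > 0"
      using \<open>0 < s\<close> x0 \<sigma>(2) by (simp add: add_nonneg_pos)
    finally have "0 \<le> qform M (z + (\<sigma> * s) *\<^sub>R x0)"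
      by (rule strict)
    then show "0 \<le> qform M z + (2 * \<sigma> * (z \<bullet> (M *v x0))) * s + qform M x0 * s\<^sup>2"
      using qform_add_scaleR[OF sM, of z "\<sigma> * s" x0] \<sigma>(1)
      by (simp add: power_mult_distrib algebra_simps)
  qed
  then show ?thesis
    by (rule nonneg_quadratic_at_right_0)
qed

lemma qform_ratio_bound:
  assumes sM: "symmetric_mat M" and sN: "symmetric_mat N"
    and nonneg: "\<And>z. 0 \<le> qform N z \<Longrightarrow> 0 \<le> qform M z"
    and x: "0 < qform N x" and y: "qform N y < 0"
  shows "qform M x / qform N x * qform N y \<le> qform M y"
proof -
  define \<alpha> where "\<alpha> = qform M x / qform N x"
  define b where "b = y \<bullet> (N *v x)"
  define e where "e = y \<bullet> (M *v x) - \<alpha> * b"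
  define p where "p = qform M y - \<alpha> * qform N y"
  have on_roots: "0 \<le> p + 2 * t * e"
    if t: "qform N y + 2 * t * b + t\<^sup>2 * qform N x = 0" for t
  proof -
    have "qform N (y + t *\<^sub>R x) = 0"
      using qform_add_scaleR[OF sN, of y t x] t by (simp add: b_def)
    then have "0 \<le> qform M (y + t *\<^sub>R x)"
      by (simp add: nonneg)
    also have "qform M (y + t *\<^sub>R x) = p + 2 * t * e + \<alpha> * (qform N y + 2 * t * b + t\<^sup>2 * qform N x)"
      using qform_add_scaleR[OF sM, of y t x] x
      by (simp add: \<alpha>_def b_def e_def p_def algebra_simps)
    finally show ?thesis
      using t by simp
  qed
  obtain t1 t2 where "0 < t1" "t2 < 0"
    and "qform N y + 2 * t1 * b + t1\<^sup>2 * qform N x = 0"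
    and "qform N y + 2 * t2 * b + t2\<^sup>2 * qform N x = 0"
    using quadratic_has_roots_of_both_signs[OF x y] by metis
  then have "0 \<le> p + 2 * t1 * e" "0 \<le> p + 2 * t2 * e"
    using on_roots by auto
  with \<open>0 < t1\<close> \<open>t2 < 0\<close> have "0 \<le> p"
    by (cases "0 \<le> e") (auto simp: mult_nonpos_nonneg mult_nonneg_nonpos intro: order_trans)
  then show ?thesis
    by (simp add: p_def \<alpha>_def)
qed

lemma s_lemma:
  assumes sM: "symmetric_mat M" and sN: "symmetric_mat N"
    and x0: "0 < qform N x0"
    and strict: "\<And>z. 0 < qform N z \<Longrightarrow> 0 \<le> qform M z"
  shows "\<exists>\<alpha>\<ge>0. psd_mat (M - \<alpha> *\<^sub>R N)"
proof -
  have nonneg: "0 \<le> qform M z" if "0 \<le> qform N z" for z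
    using qform_nonneg_of_strict[OF sM sN x0 strict that] .
  define r where "r y = qform M y / qform N y" for y
  define S where "S = insert 0 (r ` {y. qform N y < 0})"
  have S_le_r: "s \<le> r x" if "s \<in> S" and x: "0 < qform N x" for s x
  proof -
    have "0 \<le> r x"
      using x nonneg by (simp add: r_def)
    moreover have "r y \<le> r x" if y: "qform N y < 0" for y
      using qform_ratio_bound[OF sM sN nonneg x y] y
      by (simp add: r_def neg_divide_le_eq)
    ultimately show ?thesis
      using \<open>s \<in> S\<close> by (auto simp: S_def)
  qed
  define \<alpha> where "\<alpha> = Sup S"
  have bdd: "bdd_above S"
    using S_le_r[OF _ x0] by (auto simp: bdd_above_def)
  have "0 \<le> \<alpha>"
    unfolding \<alpha>_def using bdd by (auto intro: cSup_upper simp: S_def)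
  moreover have "0 \<le> qform M v - \<alpha> * qform N v" for v
  proof (cases "qform N v" "0 :: real" rule: linorder_cases)
    case less
    then have "r v \<le> \<alpha>"
      unfolding \<alpha>_def using bdd by (auto intro: cSup_upper simp: S_def)
    then show ?thesis
      using less by (simp add: r_def neg_divide_le_eq)
  next
    case equal
    then show ?thesis
      using nonneg by simp
  next
    case greater
    then have "\<alpha> \<le> r v"
      unfolding \<alpha>_def using S_le_r by (intro cSup_least) (auto simp: S_def)
    then show ?thesis
      using greater by (simp add: r_def pos_le_divide_eq)
  qed
  ultimately show ?thesis
    using sM sN by (auto simp: psd_mat_iff_qform qform_diff_scaleR symmetric_mat_diff_scaleR)
qed

lemma pd_congruence_through:
  fixes N :: "real^'n^'n" and Xbar :: "real^'k^'n"
  assumes sN: "symmetric_mat N"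
    and pd: "pd_mat (transpose Xbar ** N ** Xbar)"
    and z: "0 < qform N z"
  obtains X :: "real^'k^'n" and d where "pd_mat (transpose X ** N ** X)" and "X *v d = z"
proof -
  define c where "c = transpose Xbar *v (N *v z)"
  define d :: "real^'k" where "d = (if c = 0 then 1 else c)"
  have "d \<noteq> 0"
    by (simp add: d_def vec_eq_iff)
  then have dd: "0 < d \<bullet> d"
    by simp
  define \<mu> where "\<mu> v = (d \<bullet> v) / (d \<bullet> d)" for v
  define f where "f v = Xbar *v (v - \<mu> v *\<^sub>R d) + \<mu> v *\<^sub>R z" for v
  have "linear f"
    unfolding f_def \<mu>_def
    by (rule linearI) (simp_all add: matrix_vector_right_distrib matrix_vector_mult_scaleR
        matrix_vector_mult_diff_distrib inner_add_right add_divide_distrib scaleR_add_left algebra_simps)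
  define X :: "real^'k^'n" where "X = matrix f"
  have Xv: "X *v v = f v" for v
    using \<open>linear f\<close> by (simp add: X_def matrix_works)
  have "0 < qform N (f v)" if "v \<noteq> 0" for v
  proof -
    define w where "w = v - \<mu> v *\<^sub>R d"
    have "w \<bullet> d = 0"
      using dd by (simp add: w_def \<mu>_def inner_diff_left inner_commute[of v d])
    \<comment> \<open>\<open>d\<close> is a multiple of \<open>c\<close> or \<open>c = 0\<close>, so the cross term vanishes\<close>
    then have "(Xbar *v w) \<bullet> (N *v z) = 0"
      by (metis c_def d_def dot_lmul_matrix inner_commute inner_zero_right transpose_matrix_vector)
    then have "qform N (f v) = qform (transpose Xbar ** N ** Xbar) w + (\<mu> v)\<^sup>2 * qform N z"
      using qform_add_scaleR[OF sN, of "Xbar *v w" "\<mu> v" z]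
      by (simp add: f_def w_def qform_congruence)
    moreover have "0 \<le> qform (transpose Xbar ** N ** Xbar) w"
      using pd by (cases "w = 0") (auto simp: pd_mat_iff_qform qform_def less_imp_le)
    moreover have "w \<noteq> 0 \<or> \<mu> v \<noteq> 0"
      using that by (auto simp: w_def)
    ultimately show ?thesis
      using pd z by (auto simp: pd_mat_iff_qform intro: add_pos_nonneg add_nonneg_pos)
  qed
  then have "pd_mat (transpose X ** N ** X)"
    using sN by (simp add: pd_mat_iff_qform symmetric_mat_congruence qform_congruence Xv)
  moreover have "X *v d = z"
    using dd by (simp add: Xv f_def \<mu>_def)
  ultimately show ?thesis
    using that by blast
qed

lemma psd_congruence_of_psd_diff:
  fixes X :: "real^'k^'n"
  assumes sM: "symmetric_mat M" and \<alpha>: "0 \<le> \<alpha>" and diff: "psd_mat (M - \<alpha> *\<^sub>R N)"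
    and N: "psd_mat (transpose X ** N ** X)"
  shows "psd_mat (transpose X ** M ** X)"
proof -
  have "0 \<le> qform M u" if "0 \<le> qform N u" for u
    using \<alpha> diff that qform_diff_scaleR[of M \<alpha> N u]
    by (smt (verit) psd_mat_iff_qform mult_nonneg_nonneg)
  then show ?thesis
    using N sM by (simp add: psd_mat_iff_qform qform_congruence symmetric_mat_congruence)
qed

theorem theorem3:
  fixes M N :: "real^'n^'n"
    and Xbar :: "real^'k^'n"
  assumes "symmetric_mat M" and "symmetric_mat N"
    and "pd_mat (transpose Xbar ** N ** Xbar)"
  shows "((\<forall>X :: real^'k^'n. psd_mat (transpose X ** N ** X) \<longrightarrow> psd_mat (transpose X ** M ** X))
          \<longleftrightarrow> (\<forall>X :: real^'k^'n. pd_mat (transpose X ** N ** X) \<longrightarrow> psd_mat (transpose X ** M ** X)))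
       \<and> ((\<forall>X :: real^'k^'n. pd_mat (transpose X ** N ** X) \<longrightarrow> psd_mat (transpose X ** M ** X))
          \<longleftrightarrow> (\<exists>\<alpha>::real. \<alpha> \<ge> 0 \<and> psd_mat (M - \<alpha> *\<^sub>R N)))"
proof -
  note sM = assms(1) and sN = assms(2) and pd = assms(3)
  let ?I = "\<forall>X :: real^'k^'n. psd_mat (transpose X ** N ** X) \<longrightarrow> psd_mat (transpose X ** M ** X)"
  let ?II = "\<forall>X :: real^'k^'n. pd_mat (transpose X ** N ** X) \<longrightarrow> psd_mat (transpose X ** M ** X)"
  let ?III = "\<exists>\<alpha>::real. \<alpha> \<ge> 0 \<and> psd_mat (M - \<alpha> *\<^sub>R N)"
  have "?I \<Longrightarrow> ?II"
    by (blast intro: pd_imp_psd_mat)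
  moreover have "?III \<Longrightarrow> ?I"
    using psd_congruence_of_psd_diff[OF sM] by blast
  moreover have "?III" if ?II
  proof (rule s_lemma[OF sM sN])
    have "(1 :: real^'k) \<noteq> 0"
      by (simp add: vec_eq_iff)
    then show "0 < qform N (Xbar *v 1)"
      using pd by (simp add: pd_mat_iff_qform qform_congruence)
    show "0 \<le> qform M z" if "0 < qform N z" for z
    proof -
      obtain X :: "real^'k^'n" and d where "pd_mat (transpose X ** N ** X)" and "X *v d = z"
        using pd_congruence_through[OF sN pd \<open>0 < qform N z\<close>] .
      then show ?thesis
        using \<open>?II\<close> by (metis psd_mat_iff_qform qform_congruence)
    qed
  qed
  ultimately show ?thesis
    by blast
qed

end
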